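(* Let $G$ be a finite group with $G=\langle x,y\rangle$, where $x$ has order $4$, $y$ has order at least $5$, and $xy$ has order at least $3$. Then $\mathrm{Cay}(G,\{x,y\})$ is an oriented regular representation (ORR) of $G$, unless $y$ has order $12$, $x=y^9$, and $G\cong\mathbb{Z}_{12}$.
   Context: For a group $G$ and $S\subseteq G$, the Cayley digraph $\mathrm{Cay}(G,S)$ has vertex set $G$, and $(u,v)$ is an arc whenever $vu^{-1}\in S$. Its automorphism group consists of the permutations of $G$ preserving the arc set, and always contains the right regular representation of $G$. $\mathrm{Cay}(G,S)$ is an oriented regular representation (ORR) if its automorphism group equals the right regular representation of $G$ and it is a proper digraph, i.e. $(u,v)$ being an arc implies $(v,u)$ is not an arc (equivalently $S\cap S^{-1}=\emptyset$). *)

theory Defs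
  imports "HOL-Algebra.Algebra"
begin

definition cay_arc :: "('a, 'b) monoid_scheme \<Rightarrow> 'a set \<Rightarrow> 'a \<Rightarrow> 'a \<Rightarrow> bool" where
  "cay_arc G S u v \<longleftrightarrow> u \<in> carrier G \<and> v \<in> carrier G \<and> v \<otimes>\<^bsub>G\<^esub> inv\<^bsub>G\<^esub> u \<in> S"

definition cay_aut :: "('a, 'b) monoid_scheme \<Rightarrow> 'a set \<Rightarrow> ('a \<Rightarrow> 'a) \<Rightarrow> bool" where
  "cay_aut G S \<sigma> \<longleftrightarrow> bij_betw \<sigma> (carrier G) (carrier G) \<and>
     (\<forall>u\<in>carrier G. \<forall>v\<in>carrier G. cay_arc G S u v \<longleftrightarrow> cay_arc G S (\<sigma> u) (\<sigma> v))"

definition is_ORR :: "('a, 'b) monoid_scheme \<Rightarrow> 'a set \<Rightarrow> bool" where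
  "is_ORR G S \<longleftrightarrow>
     (\<forall>u v. cay_arc G S u v \<longrightarrow> \<not> cay_arc G S v u) \<and>
     (\<forall>\<sigma>. cay_aut G S \<sigma> \<longrightarrow> (\<exists>g\<in>carrier G. \<forall>u\<in>carrier G. \<sigma> u = u \<otimes>\<^bsub>G\<^esub> g))"

end

theory Submission
  imports Defs
begin

(* Arcs of Cay(G,{x,y}) are u -> a u with a in {x,y}. Since x^4 = 1, every x-arc lies on a
   directed 4-cycle, and an automorphism maps it to a closed walk of length 4, i.e. to a relation
   a b c d = 1 over {x,y}. The order conditions rule out all such relations except x^4 and the
   rotations of x y^3, and x y^3 = 1 forces the exceptional case (x = y^-3, so G = <y> is cyclic
   of order 12). Hence automorphisms send x-arcs to x-arcs and therefore y-arcs to y-arcs; they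
   commute with left multiplication by the generators, hence by all of G, so they are right
   translations. Properness holds because there is no relation of length 2. *)

context group
begin

lemma cay_arc_iff:
  assumes S: "S \<subseteq> carrier G"
  shows "cay_arc G S u v \<longleftrightarrow> u \<in> carrier G \<and> (\<exists>a\<in>S. v = a \<otimes> u)"
proof
  assume "cay_arc G S u v"
  then have u: "u \<in> carrier G" and v: "v \<in> carrier G" and "v \<otimes> inv u \<in> S"
    by (simp_all add: cay_arc_def)
  moreover have "v = (v \<otimes> inv u) \<otimes> u"
    using u v by (simp add: m_assoc)
  ultimately show "u \<in> carrier G \<and> (\<exists>a\<in>S. v = a \<otimes> u)"
    by blast
next
  assume "u \<in> carrier G \<and> (\<exists>a\<in>S. v = a \<otimes> u)"
  then obtain a where u: "u \<in> carrier G" and a: "a \<in> S" and v: "v = a \<otimes> u"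
    by blast
  have "a \<in> carrier G" using a S by blast
  with u v a show "cay_arc G S u v"
    by (simp add: cay_arc_def m_assoc)
qed

lemma cay_arc_asym:
  assumes S: "S \<subseteq> carrier G"
    and no_inverse_pair: "\<And>a b. a \<in> S \<Longrightarrow> b \<in> S \<Longrightarrow> b \<otimes> a \<noteq> \<one>"
    and uv: "cay_arc G S u v"
  shows "\<not> cay_arc G S v u"
proof
  assume "cay_arc G S v u"
  with uv obtain a b where ab: "a \<in> S" "b \<in> S" and u: "u \<in> carrier G"
      and "v = a \<otimes> u" "u = b \<otimes> v"
    unfolding cay_arc_iff[OF S] by blast
  then have "(b \<otimes> a) \<otimes> u = u"
    using S by (metis m_assoc subsetD)
  then have "b \<otimes> a = \<one>"
    using ab u S by (meson m_closed r_cancel_one subsetD)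
  with no_inverse_pair ab show False by blast
qed

lemma foldr_mult_closed:
  "set ws \<subseteq> carrier G \<Longrightarrow> u \<in> carrier G \<Longrightarrow> foldr (\<otimes>) ws u \<in> carrier G"
  by (induction ws) auto

lemma foldr_mult_eq:
  "set ws \<subseteq> carrier G \<Longrightarrow> u \<in> carrier G \<Longrightarrow> foldr (\<otimes>) ws u = foldr (\<otimes>) ws \<one> \<otimes> u"
  by (induction ws) (auto simp: m_assoc foldr_mult_closed)

lemma foldr_mult_replicate:
  assumes "x \<in> carrier G" "u \<in> carrier G"
  shows "foldr (\<otimes>) (replicate n x) u = x [^] n \<otimes> u"
proof (induction n)
  case (Suc n)
  then show ?case
    using assms nat_pow_Suc2[of x n] by (simp add: m_assoc del: foldr_replicate)
qed (simp add: assms)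

lemma cay_aut_left_mult:
  assumes S: "S \<subseteq> carrier G" and aut: "cay_aut G S \<sigma>"
    and "b \<in> S" and u: "u \<in> carrier G"
  shows "\<exists>a\<in>S. \<sigma> (b \<otimes> u) = a \<otimes> \<sigma> u"
proof -
  have "b \<otimes> u \<in> carrier G" "cay_arc G S u (b \<otimes> u)"
    using \<open>b \<in> S\<close> S u by (auto simp: cay_arc_iff)
  then have "cay_arc G S (\<sigma> u) (\<sigma> (b \<otimes> u))"
    using aut u unfolding cay_aut_def by blast
  then show ?thesis
    using S by (auto simp: cay_arc_iff)
qed

lemma cay_aut_maps_walk:
  assumes S: "S \<subseteq> carrier G" and aut: "cay_aut G S \<sigma>"
    and "set vs \<subseteq> S" and u: "u \<in> carrier G"
  shows "\<exists>ws. length ws = length vs \<and> set ws \<subseteq> S \<and>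
           \<sigma> (foldr (\<otimes>) vs u) = foldr (\<otimes>) ws (\<sigma> u)"
  using \<open>set vs \<subseteq> S\<close>
proof (induction vs)
  case Nil
  then show ?case by simp
next
  case (Cons v vs)
  then obtain ws where ws: "length ws = length vs" "set ws \<subseteq> S"
      and walk: "\<sigma> (foldr (\<otimes>) vs u) = foldr (\<otimes>) ws (\<sigma> u)"
    by auto
  obtain a where "a \<in> S" "\<sigma> (v \<otimes> foldr (\<otimes>) vs u) = a \<otimes> foldr (\<otimes>) ws (\<sigma> u)"
    using cay_aut_left_mult[OF S aut, of v "foldr (\<otimes>) vs u"] Cons.prems S u walk
    by (auto simp: foldr_mult_closed)
  with ws show ?case
    by (intro exI[of _ "a # ws"]) auto
qed

lemma left_mult_commute_generate:
  assumes S: "S \<subseteq> carrier G" and \<sigma>: "\<sigma> \<in> carrier G \<rightarrow> carrier G"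
    and commute: "\<And>a u. a \<in> S \<Longrightarrow> u \<in> carrier G \<Longrightarrow> \<sigma> (a \<otimes> u) = a \<otimes> \<sigma> u"
    and "h \<in> generate G S" "u \<in> carrier G"
  shows "\<sigma> (h \<otimes> u) = h \<otimes> \<sigma> u"
  using assms(4,5)
proof (induction arbitrary: u rule: generate.induct)
  case one
  then show ?case using \<sigma> by (simp add: funcset_mem)
next
  case (incl a)
  then show ?case by (rule commute)
next
  case (inv a)
  then have a: "a \<in> carrier G" using S by auto
  have "a \<otimes> \<sigma> (inv a \<otimes> u) = \<sigma> (a \<otimes> (inv a \<otimes> u))"
    using inv a by (simp add: commute)
  also have "\<dots> = \<sigma> u"
    using a inv.prems by (simp flip: m_assoc)
  finally have "a \<otimes> \<sigma> (inv a \<otimes> u) = \<sigma> u" .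
  moreover have "\<sigma> (inv a \<otimes> u) \<in> carrier G" "\<sigma> u \<in> carrier G"
    using \<sigma> a inv.prems by (auto intro: funcset_mem)
  ultimately show ?case
    using a by (simp add: inv_solve_left)
next
  case (eng h1 h2)
  have h1: "h1 \<in> carrier G" and h2: "h2 \<in> carrier G"
    using eng.hyps generate_incl[OF S] by blast+
  have "\<sigma> (h1 \<otimes> h2 \<otimes> u) = \<sigma> (h1 \<otimes> (h2 \<otimes> u))"
    using h1 h2 eng.prems by (simp add: m_assoc)
  also have "\<dots> = h1 \<otimes> (h2 \<otimes> \<sigma> u)"
    using eng h2 by simp
  finally show ?case
    using h1 h2 eng.prems \<sigma> by (simp add: m_assoc funcset_mem)
qed

lemma is_ORR_if_label_preserving:
  assumes S: "S \<subseteq> carrier G" and gen: "generate G S = carrier G"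
    and no_inverse_pair: "\<And>a b. a \<in> S \<Longrightarrow> b \<in> S \<Longrightarrow> b \<otimes> a \<noteq> \<one>"
    and label_preserving:
      "\<And>\<sigma> a u. cay_aut G S \<sigma> \<Longrightarrow> a \<in> S \<Longrightarrow> u \<in> carrier G \<Longrightarrow> \<sigma> (a \<otimes> u) = a \<otimes> \<sigma> u"
  shows "is_ORR G S"
  unfolding is_ORR_def
proof (intro conjI allI impI)
  show "\<not> cay_arc G S v u" if "cay_arc G S u v" for u v
    using cay_arc_asym[OF S no_inverse_pair that] .
next
  fix \<sigma> assume aut: "cay_aut G S \<sigma>"
  then have \<sigma>: "\<sigma> \<in> carrier G \<rightarrow> carrier G"
    by (auto simp: cay_aut_def bij_betw_def)
  have "\<sigma> u = u \<otimes> \<sigma> \<one>" if "u \<in> carrier G" for u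
    using left_mult_commute_generate[OF S \<sigma> label_preserving[OF aut], of u \<one>] that gen \<sigma>
    by (simp add: funcset_mem)
  then show "\<exists>g\<in>carrier G. \<forall>u\<in>carrier G. \<sigma> u = u \<otimes> g"
    using \<sigma> by blast
qed

lemma cay_aut_preserves_x_label:
  assumes S: "S \<subseteq> carrier G" and "x \<in> S"
    and "n > 0" and x_pow: "x [^] n = \<one>"
    and only_x: "\<And>ws. length ws = n \<Longrightarrow> set ws \<subseteq> S \<Longrightarrow>
                   foldr (\<otimes>) ws \<one> = \<one> \<Longrightarrow> set ws \<subseteq> {x}"
    and aut: "cay_aut G S \<sigma>" and u: "u \<in> carrier G"
  shows "\<sigma> (x \<otimes> u) = x \<otimes> \<sigma> u"
proof -
  have x: "x \<in> carrier G" using \<open>x \<in> S\<close> S by blast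
  have \<sigma>u: "\<sigma> u \<in> carrier G"
    using aut u by (auto simp: cay_aut_def bij_betw_def)
  obtain a where a: "a \<in> S" and \<sigma>xu: "\<sigma> (x \<otimes> u) = a \<otimes> \<sigma> u"
    using cay_aut_left_mult[OF S aut \<open>x \<in> S\<close> u] by blast
  obtain m where n: "n = Suc m"
    using \<open>n > 0\<close> gr0_implies_Suc by blast
  have "foldr (\<otimes>) (replicate m x) (x \<otimes> u) = x [^] m \<otimes> x \<otimes> u"
    using x u by (simp add: foldr_mult_replicate m_assoc del: foldr_replicate)
  also have "\<dots> = u"
    using x u x_pow n by simp
  finally have back_to_u: "foldr (\<otimes>) (replicate m x) (x \<otimes> u) = u" .
  have "set (replicate m x) \<subseteq> S" "x \<otimes> u \<in> carrier G"
    using \<open>x \<in> S\<close> x u by auto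
  from cay_aut_maps_walk[OF S aut this] obtain ws where ws: "length ws = m" "set ws \<subseteq> S"
    and walk: "\<sigma> u = foldr (\<otimes>) ws (a \<otimes> \<sigma> u)"
    unfolding back_to_u \<sigma>xu by auto
  have ws_carrier: "set ws \<subseteq> carrier G" and a_carrier: "a \<in> carrier G"
    using ws a S by auto
  have "foldr (\<otimes>) (ws @ [a]) \<one> \<otimes> \<sigma> u = foldr (\<otimes>) ws \<one> \<otimes> a \<otimes> \<sigma> u"
    using foldr_mult_eq[OF ws_carrier a_carrier] a_carrier by simp
  also have "\<dots> = \<sigma> u"
    using walk foldr_mult_eq[OF ws_carrier, of "a \<otimes> \<sigma> u"] ws_carrier a_carrier \<sigma>u
    by (simp add: m_assoc foldr_mult_closed)
  finally have "foldr (\<otimes>) (ws @ [a]) \<one> = \<one>"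
    using ws_carrier a_carrier \<sigma>u by (simp add: foldr_mult_closed)
  then have "a = x"
    using only_x[of "ws @ [a]"] ws a n by auto
  with \<sigma>xu show ?thesis by simp
qed

lemma cay_aut_preserves_labels:
  assumes x: "x \<in> carrier G" and y: "y \<in> carrier G" and "x \<noteq> y"
    and "n > 0" and "x [^] n = \<one>"
    and "\<And>ws. length ws = n \<Longrightarrow> set ws \<subseteq> {x, y} \<Longrightarrow>
               foldr (\<otimes>) ws \<one> = \<one> \<Longrightarrow> set ws \<subseteq> {x}"
    and aut: "cay_aut G {x, y} \<sigma>" and "c \<in> {x, y}" and u: "u \<in> carrier G"
  shows "\<sigma> (c \<otimes> u) = c \<otimes> \<sigma> u"
proof -
  have S: "{x, y} \<subseteq> carrier G" using x y by blast
  have x_label: "\<sigma> (x \<otimes> u) = x \<otimes> \<sigma> u"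
    using cay_aut_preserves_x_label[OF S _ assms(4-7) u] by blast
  obtain b where b: "b \<in> {x, y}" "\<sigma> (y \<otimes> u) = b \<otimes> \<sigma> u"
    using cay_aut_left_mult[OF S aut _ u] by blast
  have "b \<noteq> x"
  proof
    assume "b = x"
    then have "\<sigma> (y \<otimes> u) = \<sigma> (x \<otimes> u)" using b x_label by simp
    then have "y \<otimes> u = x \<otimes> u"
      using aut x y u by (metis cay_aut_def bij_betw_def inj_onD m_closed)
    then show False using \<open>x \<noteq> y\<close> x y u by simp
  qed
  with b x_label \<open>c \<in> {x, y}\<close> show ?thesis by auto
qed

lemma ord_le_if_pow_eq_one:
  "c \<in> carrier G \<Longrightarrow> c [^] n = \<one> \<Longrightarrow> 0 < n \<Longrightarrow> ord c \<le> n"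
  by (simp add: pow_eq_id dvd_imp_le)

lemma no_length_2_relation:
  assumes x: "x \<in> carrier G" and y: "y \<in> carrier G"
    and ox: "ord x = 4" and oy: "ord y \<ge> 5" and oxy: "ord (x \<otimes> y) \<ge> 3"
    and "a \<in> {x, y}" "b \<in> {x, y}"
  shows "b \<otimes> a \<noteq> \<one>"
proof -
  have not_involution: "c \<otimes> c \<noteq> \<one>" if "c \<in> carrier G" "ord c > 2" for c
    using that ord_le_if_pow_eq_one[of c 2] by (auto simp: numeral_eq_Suc)
  have "x \<otimes> y \<noteq> \<one>"
    using oxy ord_le_if_pow_eq_one[of \<one> 1] by auto
  moreover have "y \<otimes> x \<noteq> \<one>"
    using calculation x y inv_comm by blast
  ultimately show ?thesis
    using assms not_involution[OF x] not_involution[OF y] by auto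
qed

lemma mult4_eq_one_rotate:
  assumes "a \<otimes> b \<otimes> c \<otimes> d = \<one>"
    and "a \<in> carrier G" "b \<in> carrier G" "c \<in> carrier G" "d \<in> carrier G"
  shows "b \<otimes> c \<otimes> d \<otimes> a = \<one>"
  using assms inv_comm[of a "b \<otimes> c \<otimes> d"] by (simp add: m_assoc)

lemma length_4_words_ne_one:
  assumes x: "x \<in> carrier G" and y: "y \<in> carrier G"
    and ox: "ord x = 4" and oy: "ord y \<ge> 5" and oxy: "ord (x \<otimes> y) \<ge> 3"
  shows "y \<otimes> y \<otimes> y \<otimes> y \<noteq> \<one>" and "x \<otimes> x \<otimes> x \<otimes> y \<noteq> \<one>"
    and "x \<otimes> x \<otimes> y \<otimes> y \<noteq> \<one>" and "x \<otimes> y \<otimes> x \<otimes> y \<noteq> \<one>"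
proof -
  have pow4: "g [^] (4::nat) = g \<otimes> g \<otimes> g \<otimes> g" if "g \<in> carrier G" for g
    using that by (simp add: numeral_eq_Suc)
  have xxxx: "x \<otimes> x \<otimes> x \<otimes> x = \<one>"
    using x ox pow_ord_eq_1[OF x] pow4[OF x] by simp
  show yyyy: "y \<otimes> y \<otimes> y \<otimes> y \<noteq> \<one>"
    using y oy ord_le_if_pow_eq_one[of y 4] pow4[OF y] by auto
  show "x \<otimes> x \<otimes> x \<otimes> y \<noteq> \<one>"
  proof
    assume "x \<otimes> x \<otimes> x \<otimes> y = \<one>"
    then have "(x \<otimes> x \<otimes> x) \<otimes> y = (x \<otimes> x \<otimes> x) \<otimes> x"
      using xxxx by simp
    then have "y = x" using x y by simp
    then show False using ox oy by simp
  qed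
  show "x \<otimes> x \<otimes> y \<otimes> y \<noteq> \<one>"
  proof
    assume "x \<otimes> x \<otimes> y \<otimes> y = \<one>"
    then have "(x \<otimes> x) \<otimes> (y \<otimes> y) = (x \<otimes> x) \<otimes> (x \<otimes> x)"
      using xxxx x y by (simp add: m_assoc)
    then have "y \<otimes> y = x \<otimes> x" using x y by simp
    then have "y \<otimes> y \<otimes> y \<otimes> y = \<one>"
      using xxxx x y by (simp add: m_assoc)
    with yyyy show False ..
  qed
  show "x \<otimes> y \<otimes> x \<otimes> y \<noteq> \<one>"
    using oxy ord_le_if_pow_eq_one[of "x \<otimes> y" 2] x y by (auto simp: numeral_eq_Suc m_assoc)
qed

lemma length_4_relation_starts_with_x:
  assumes x: "x \<in> carrier G" and y: "y \<in> carrier G"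
    and ox: "ord x = 4" and oy: "ord y \<ge> 5" and oxy: "ord (x \<otimes> y) \<ge> 3"
    and xyyy: "x \<otimes> y \<otimes> y \<otimes> y \<noteq> \<one>"
    and letters: "a \<in> {x, y}" "b \<in> {x, y}" "c \<in> {x, y}" "d \<in> {x, y}"
    and rel: "a \<otimes> b \<otimes> c \<otimes> d = \<one>"
  shows "a = x"
proof (rule ccontr)
  assume "a \<noteq> x"
  with letters have "a = y" by blast
  have carrier: "a \<in> carrier G" "b \<in> carrier G" "c \<in> carrier G" "d \<in> carrier G"
    using letters x y by auto
  have rot1: "b \<otimes> c \<otimes> d \<otimes> a = \<one>" and rot2: "c \<otimes> d \<otimes> a \<otimes> b = \<one>"
      and rot3: "d \<otimes> a \<otimes> b \<otimes> c = \<one>"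
    using mult4_eq_one_rotate carrier rel by meson+
  have "b = x \<or> b = y" "c = x \<or> c = y" "d = x \<or> d = y"
    using letters by auto
  then show False
    using rel rot1 rot2 rot3 length_4_words_ne_one[OF x y ox oy oxy] xyyy unfolding \<open>a = y\<close>
    by (elim disjE) simp_all
qed

lemma length_4_relations_are_powers_of_x:
  assumes x: "x \<in> carrier G" and y: "y \<in> carrier G"
    and ox: "ord x = 4" and oy: "ord y \<ge> 5" and oxy: "ord (x \<otimes> y) \<ge> 3"
    and xyyy: "x \<otimes> y \<otimes> y \<otimes> y \<noteq> \<one>"
    and "length ws = 4" and letters: "set ws \<subseteq> {x, y}" and rel: "foldr (\<otimes>) ws \<one> = \<one>"
  shows "set ws \<subseteq> {x}"
proof -
  obtain a b c d where ws: "ws = [a, b, c, d]"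
    using \<open>length ws = 4\<close> by (auto simp: numeral_eq_Suc length_Suc_conv)
  have abcd: "a \<in> {x, y}" "b \<in> {x, y}" "c \<in> {x, y}" "d \<in> {x, y}"
    using letters ws by auto
  then have carrier: "a \<in> carrier G" "b \<in> carrier G" "c \<in> carrier G" "d \<in> carrier G"
    using x y by auto
  have rel0: "a \<otimes> b \<otimes> c \<otimes> d = \<one>"
    using rel ws carrier by (simp add: m_assoc)
  have rel1: "b \<otimes> c \<otimes> d \<otimes> a = \<one>" and rel2: "c \<otimes> d \<otimes> a \<otimes> b = \<one>"
      and rel3: "d \<otimes> a \<otimes> b \<otimes> c = \<one>"
    using mult4_eq_one_rotate carrier rel0 by meson+
  note first_x = length_4_relation_starts_with_x[OF x y ox oy oxy xyyy]
  show ?thesis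
    using first_x[OF abcd rel0] first_x[OF abcd(2-4,1) rel1]
      first_x[OF abcd(3,4,1,2) rel2] first_x[OF abcd(4,1-3) rel3] ws
    by simp
qed

lemma iso_integer_mod_group_ord:
  assumes y: "y \<in> carrier G" and gen: "generate G {y} = carrier G"
  shows "G \<cong> integer_mod_group (ord y)"
proof -
  \<comment> \<open>For \<open>ord y = 0\<close> this is the infinite cyclic case: \<open>integer_mod_group 0\<close> is the integers.\<close>
  let ?n = "int (ord y)" and ?Z = "integer_mod_group (ord y)"
  define h where "h k = y [^] (k::int)" for k
  have h_mod: "h (k mod ?n) = h k" for k
    unfolding h_def using int_pow_eq[OF y] by simp
  have "h \<in> hom ?Z G"
    by (rule homI) (simp_all add: h_def y h_mod[unfolded h_def] int_pow_mult)
  moreover have "inj_on h (carrier ?Z)"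
  proof (rule inj_onI)
    fix a b assume "a \<in> carrier ?Z" "b \<in> carrier ?Z" "h a = h b"
    then have "a mod ?n = a" "b mod ?n = b" "?n dvd b - a"
      using int_pow_eq[OF y] by (auto simp: carrier_integer_mod_group h_def split: if_splits)
    then show "a = b"
      by (metis mod_eq_dvd_iff)
  qed
  moreover have "h ` carrier ?Z = carrier G"
  proof
    show "h ` carrier ?Z \<subseteq> carrier G"
      using y by (auto simp: h_def)
    show "carrier G \<subseteq> h ` carrier ?Z"
    proof
      fix z assume "z \<in> carrier G"
      then obtain k where "z = h k"
        using gen generate_pow[OF y] by (auto simp: h_def)
      moreover have "k mod ?n \<in> carrier ?Z"
        by (simp add: carrier_integer_mod_group)
      ultimately show "z \<in> h ` carrier ?Z"
        using h_mod by (metis image_eqI)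
    qed
  qed
  ultimately have "h \<in> iso ?Z G"
    by (simp add: iso_iff)
  then show ?thesis
    using is_isoI group.iso_sym[OF group_integer_mod_group] by blast
qed

lemma exceptional_length_4_relation:
  assumes x: "x \<in> carrier G" and y: "y \<in> carrier G"
    and gen: "generate G {x, y} = carrier G"
    and ox: "ord x = 4" and oy: "ord y \<ge> 5"
    and xyyy: "x \<otimes> y \<otimes> y \<otimes> y = \<one>"
  shows "ord y = 12 \<and> x = y [^] (9::nat) \<and> G \<cong> integer_mod_group 12"
proof -
  have "x \<otimes> y [^] (3::int) = \<one>"
    using xyyy x y int_pow_int[of G y 3] by (simp add: numeral_eq_Suc m_assoc)
  then have x_eq: "x = y [^] (-3::int)"
    using inv_equality x y int_pow_neg by (metis int_pow_closed)
  have x_pow: "x [^] k = \<one> \<longleftrightarrow> int (ord y) dvd 3 * k" for k :: int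
    using x_eq y int_pow_pow[OF y, of "-3" k] int_pow_eq_id[OF y, of "-3 * k"] by simp
  have "int (ord y) dvd 12" "\<not> int (ord y) dvd 6"
    using x_pow[of 4] x_pow[of 2] int_pow_eq_id[OF x] ox by simp_all
  then have "ord y dvd 12" "\<not> ord y dvd 6"
    by (metis int_dvd_int_iff of_nat_numeral)+
  moreover have "ord y \<in> {5, 6, 7, 8, 9, 10, 11, 12}"
    using oy dvd_imp_le[OF \<open>ord y dvd 12\<close>] by auto
  ultimately have oy12: "ord y = 12"
    by auto
  have "y [^] (-3::int) = y [^] (9::int)"
    using int_pow_eq[OF y] oy12 by simp
  then have x9: "x = y [^] (9::nat)"
    using x_eq int_pow_int[of G y 9] by simp
  have "{x, y} \<subseteq> generate G {y}"
    using x_eq generate_pow[OF y] generate.incl[of y "{y}"] by blast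
  then have "generate G {y} = carrier G"
    using gen generate_subgroup_incl[OF _ generate_is_subgroup] generate_incl y
    by (metis empty_subsetI insert_subset subset_antisym)
  then have "G \<cong> integer_mod_group 12"
    using iso_integer_mod_group_ord[OF y] oy12 by simp
  with oy12 x9 show ?thesis by simp
qed

end

theorem lemma2p5:
  fixes G (structure) and x y :: 'a
  assumes "group G" and "finite (carrier G)"
    and "x \<in> carrier G" and "y \<in> carrier G"
    and "generate G {x, y} = carrier G"
    and "group.ord G x = 4" and "group.ord G y \<ge> 5"
    and "group.ord G (x \<otimes> y) \<ge> 3"
    and "\<not> (group.ord G y = 12 \<and> x = y [^] (9::nat) \<and> G \<cong> integer_mod_group 12)"
  shows "is_ORR G {x, y}"
proof -
  interpret group G by fact
  have S: "{x, y} \<subseteq> carrier G"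
    using assms(3,4) by blast
  have xyyy: "x \<otimes> y \<otimes> y \<otimes> y \<noteq> \<one>"
    using exceptional_length_4_relation[OF assms(3-7)] assms(9) by blast
  have "x \<noteq> y"
  proof
    assume "x = y"
    with assms(6,7) show False by simp
  qed
  have x4: "x [^] (4::nat) = \<one>"
    using assms(3,6) pow_ord_eq_1 by metis
  note only_x4 = length_4_relations_are_powers_of_x[OF assms(3,4,6-8) xyyy]
  show ?thesis
  proof (rule is_ORR_if_label_preserving[OF S assms(5)])
    show "b \<otimes> a \<noteq> \<one>" if "a \<in> {x, y}" "b \<in> {x, y}" for a b
      using no_length_2_relation[OF assms(3,4,6-8) that] .
    show "\<sigma> (a \<otimes> u) = a \<otimes> \<sigma> u"
      if "cay_aut G {x, y} \<sigma>" "a \<in> {x, y}" "u \<in> carrier G" for \<sigma> a u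
      by (rule cay_aut_preserves_labels[OF assms(3,4) \<open>x \<noteq> y\<close> _ x4 only_x4 that]) simp
  qed
qed

end
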